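(* Let $G$ be a two-player stage game with $|V_1^{p,p}|>1$ and $|V_2^{p,p}|>1$. If $G\in\mathcal{G}_{LS}^{m,p}$, then $G\in\mathcal{G}_{LS}^{p,p}$.
   Context: A two-player stage game $G$ has finite nonempty action sets $A_1,A_2$ and payoffs $u_1,u_2:A_1\times A_2\to\mathbb{R}$, extended to mixed strategies by expectation. $G(T)$ is the $T$-round repetition with realized actions observed each round and payoffs the expected sum of stage payoffs; an SPE of $G(T)$ is a strategy profile whose continuation after every history of length $k<T$ is a Nash equilibrium of $G(T-k)$. Regimes: pure-pure ($p,p$): both players restricted to actions (in the stage game and in every round, including deviations); mixed-pure ($m,p$): player 1 may mix, player 2 uses only actions; mixed-mixed ($m,m$): both may mix. For regime $r$, $\mathrm{Nash}^r(G)$ is the set of stage-game profiles available in $r$ from which no player can profitably deviate unilaterally to a strategy available in $r$, and $V_i^r=\{u_i(\sigma):\sigma\in\mathrm{Nash}^r(G)\}$. Locally suboptimal behavior occurs in an SPE $\mu$ of $G(T)$ (regime $r$) if for some history $h$ of length $k<T$, $(\mu_1(h),\mu_2(h))\notin\mathrm{Nash}^r(G)$. $\mathcal{G}_{LS}^r$ is the set of stage games $G$ for which there exist $T\ge1$ and an SPE of $G(T)$ in regime $r$ in which locally suboptimal behavior occurs. *)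

theory Defs
  imports "HOL-Probability.Probability"
begin

record ('a, 'b) stage_game =
  A1 :: "'a set"
  A2 :: "'b set"
  u1 :: "'a \<Rightarrow> 'b \<Rightarrow> real"
  u2 :: "'a \<Rightarrow> 'b \<Rightarrow> real"

definition wf_game :: "('a, 'b) stage_game \<Rightarrow> bool" where
  "wf_game G \<longleftrightarrow> finite (A1 G) \<and> A1 G \<noteq> {} \<and> finite (A2 G) \<and> A2 G \<noteq> {}"

text \<open>Regimes: pure-pure, mixed-pure, mixed-mixed.\<close>
datatype regime = PP | MP | MM

text \<open>Stage strategies available to each player in a regime (pure actions are Dirac pmfs).\<close>
definition avail1 :: "regime \<Rightarrow> ('a, 'b) stage_game \<Rightarrow> 'a pmf set" where
  "avail1 r G = (if r = PP then return_pmf ` A1 G else {p. set_pmf p \<subseteq> A1 G})"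

definition avail2 :: "regime \<Rightarrow> ('a, 'b) stage_game \<Rightarrow> 'b pmf set" where
  "avail2 r G = (if r = MM then {q. set_pmf q \<subseteq> A2 G} else return_pmf ` A2 G)"

definition expect2 :: "'a pmf \<Rightarrow> 'b pmf \<Rightarrow> ('a \<Rightarrow> 'b \<Rightarrow> real) \<Rightarrow> real" where
  "expect2 p q f = measure_pmf.expectation p (\<lambda>a. measure_pmf.expectation q (\<lambda>b. f a b))"

definition Nash :: "regime \<Rightarrow> ('a, 'b) stage_game \<Rightarrow> ('a pmf \<times> 'b pmf) set" where
  "Nash r G = {(p, q). p \<in> avail1 r G \<and> q \<in> avail2 r G
      \<and> (\<forall>p' \<in> avail1 r G. expect2 p' q (u1 G) \<le> expect2 p q (u1 G))
      \<and> (\<forall>q' \<in> avail2 r G. expect2 p q' (u2 G) \<le> expect2 p q (u2 G))}"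

definition V1 :: "regime \<Rightarrow> ('a, 'b) stage_game \<Rightarrow> real set" where
  "V1 r G = (\<lambda>(p, q). expect2 p q (u1 G)) ` Nash r G"

definition V2 :: "regime \<Rightarrow> ('a, 'b) stage_game \<Rightarrow> real set" where
  "V2 r G = (\<lambda>(p, q). expect2 p q (u2 G)) ` Nash r G"

text \<open>Histories: chronological lists of realized action profiles.\<close>
type_synonym ('a, 'b) hist = "('a \<times> 'b) list"

definition valid_hist :: "('a, 'b) stage_game \<Rightarrow> ('a, 'b) hist \<Rightarrow> bool" where
  "valid_hist G h \<longleftrightarrow> set h \<subseteq> A1 G \<times> A2 G"

fun cont_val :: "('a \<Rightarrow> 'b \<Rightarrow> real) \<Rightarrow> nat \<Rightarrow> (('a, 'b) hist \<Rightarrow> 'a pmf)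
    \<Rightarrow> (('a, 'b) hist \<Rightarrow> 'b pmf) \<Rightarrow> ('a, 'b) hist \<Rightarrow> real" where
  "cont_val u 0 s1 s2 h = 0"
| "cont_val u (Suc n) s1 s2 h =
     expect2 (s1 h) (s2 h) (\<lambda>a b. u a b + cont_val u n s1 s2 (h @ [(a, b)]))"

definition strat1 :: "regime \<Rightarrow> ('a, 'b) stage_game \<Rightarrow> (('a, 'b) hist \<Rightarrow> 'a pmf) \<Rightarrow> bool" where
  "strat1 r G s \<longleftrightarrow> (\<forall>h. valid_hist G h \<longrightarrow> s h \<in> avail1 r G)"

definition strat2 :: "regime \<Rightarrow> ('a, 'b) stage_game \<Rightarrow> (('a, 'b) hist \<Rightarrow> 'b pmf) \<Rightarrow> bool" where
  "strat2 r G s \<longleftrightarrow> (\<forall>h. valid_hist G h \<longrightarrow> s h \<in> avail2 r G)"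

definition SPE :: "('a, 'b) stage_game \<Rightarrow> nat \<Rightarrow> regime
    \<Rightarrow> (('a, 'b) hist \<Rightarrow> 'a pmf) \<Rightarrow> (('a, 'b) hist \<Rightarrow> 'b pmf) \<Rightarrow> bool" where
  "SPE G T r s1 s2 \<longleftrightarrow> strat1 r G s1 \<and> strat2 r G s2 \<and>
     (\<forall>h. valid_hist G h \<and> length h < T \<longrightarrow>
        (\<forall>d1. strat1 r G d1 \<longrightarrow>
            cont_val (u1 G) (T - length h) d1 s2 h \<le> cont_val (u1 G) (T - length h) s1 s2 h) \<and>
        (\<forall>d2. strat2 r G d2 \<longrightarrow>
            cont_val (u2 G) (T - length h) s1 d2 h \<le> cont_val (u2 G) (T - length h) s1 s2 h))"

definition locally_suboptimal :: "('a, 'b) stage_game \<Rightarrow> nat \<Rightarrow> regime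
    \<Rightarrow> (('a, 'b) hist \<Rightarrow> 'a pmf) \<Rightarrow> (('a, 'b) hist \<Rightarrow> 'b pmf) \<Rightarrow> bool" where
  "locally_suboptimal G T r s1 s2 \<longleftrightarrow>
     (\<exists>h. valid_hist G h \<and> length h < T \<and> (s1 h, s2 h) \<notin> Nash r G)"

definition in_G_LS :: "regime \<Rightarrow> ('a, 'b) stage_game \<Rightarrow> bool" where
  "in_G_LS r G \<longleftrightarrow> (\<exists>T \<ge> 1. \<exists>s1 s2. SPE G T r s1 s2 \<and> locally_suboptimal G T r s1 s2)"

end

theory Submission imports Defs begin

text \<open>If every action profile is a pure equilibrium, each player's payoff does not depend on
  his own action, so every mixed-pure profile is an equilibrium and no locally suboptimal
  behaviour can occur. Otherwise fix a non-equilibrium profile \<open>(a\<^sub>0, b\<^sub>0)\<close> and play it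
  in the first round of \<open>G(2m+1)\<close>. Afterwards only pure stage equilibria are played, chosen
  according to the first-round outcome: a unilateral deviator is punished by his worst pure
  equilibrium in all remaining rounds, while otherwise each player is rewarded by an
  equilibrium better for him than his worst one during \<open>m\<close> of the rounds. Since both
  \<open>V\<^sub>1\<close> and \<open>V\<^sub>2\<close> have two elements such rewards exist, and for large \<open>m\<close> they
  outweigh any one-shot gain from deviating in the first round.\<close>

fun pure_Nash :: "('a, 'b) stage_game \<Rightarrow> 'a \<times> 'b \<Rightarrow> bool" where
  "pure_Nash G (a, b) \<longleftrightarrow> a \<in> A1 G \<and> b \<in> A2 G
     \<and> (\<forall>a' \<in> A1 G. u1 G a' b \<le> u1 G a b) \<and> (\<forall>b' \<in> A2 G. u2 G a b' \<le> u2 G a b)"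

lemma expect2_return_pmf [simp]: "expect2 (return_pmf a) (return_pmf b) f = f a b"
  by (simp add: expect2_def)

lemma return_pmf_in_Nash_PP_iff:
  "(return_pmf a, return_pmf b) \<in> Nash PP G \<longleftrightarrow> pure_Nash G (a, b)"
  unfolding Nash_def avail1_def avail2_def by auto

lemma Nash_PP_eq:
  "Nash PP G = (\<lambda>(a, b). (return_pmf a, return_pmf b)) ` Collect (pure_Nash G)"
  unfolding Nash_def avail1_def avail2_def by force

lemma V1_PP_eq: "V1 PP G = case_prod (u1 G) ` Collect (pure_Nash G)"
  unfolding V1_def Nash_PP_eq image_image by (simp add: case_prod_beta')

lemma V2_PP_eq: "V2 PP G = case_prod (u2 G) ` Collect (pure_Nash G)"
  unfolding V2_def Nash_PP_eq image_image by (simp add: case_prod_beta')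

lemma finite_pure_Nash: "wf_game G \<Longrightarrow> finite (Collect (pure_Nash G))"
  by (rule finite_subset[of _ "A1 G \<times> A2 G"]) (auto simp: wf_game_def)

lemma expectation_pmf_const_on:
  assumes "set_pmf p \<subseteq> S" and "\<And>x. x \<in> S \<Longrightarrow> f x = (c :: real)"
  shows "measure_pmf.expectation p f = c"
proof -
  have "measure_pmf.expectation p f = measure_pmf.expectation p (\<lambda>_. c)"
    using assms by (intro integral_cong_AE) (auto simp: AE_measure_pmf_iff)
  then show ?thesis by simp
qed

lemma Nash_MP_if_all_pure_Nash:
  assumes all: "\<forall>a \<in> A1 G. \<forall>b \<in> A2 G. pure_Nash G (a, b)"
    and p: "p \<in> avail1 MP G" and q: "q \<in> avail2 MP G"
  shows "(p, q) \<in> Nash MP G"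
proof -
  obtain b where q_eq: "q = return_pmf b" and b: "b \<in> A2 G"
    using q by (auto simp: avail2_def)
  have supp_p: "set_pmf p \<subseteq> A1 G"
    using p by (simp add: avail1_def)
  then obtain a0 where a0: "a0 \<in> A1 G"
    using set_pmf_not_empty[of p] by blast
  have u1_indep: "u1 G a b = u1 G a0 b" if "a \<in> A1 G" for a
    using all that a0 b by (meson order_antisym pure_Nash.simps)
  have u2_indep: "u2 G a b' = u2 G a b" if "a \<in> A1 G" "b' \<in> A2 G" for a b'
    using all that b by (meson order_antisym pure_Nash.simps)
  have "expect2 p' q (u1 G) = u1 G a0 b" if "p' \<in> avail1 MP G" for p'
    using that u1_indep unfolding expect2_def q_eq
    by (simp add: avail1_def expectation_pmf_const_on)
  then have dev1: "\<forall>p' \<in> avail1 MP G. expect2 p' q (u1 G) \<le> expect2 p q (u1 G)"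
    using p by simp
  have dev2: "\<forall>q' \<in> avail2 MP G. expect2 p q' (u2 G) \<le> expect2 p q (u2 G)"
  proof
    fix q' assume "q' \<in> avail2 MP G"
    then obtain b' where "q' = return_pmf b'" "b' \<in> A2 G"
      by (auto simp: avail2_def)
    then have "expect2 p q' (u2 G) = expect2 p q (u2 G)"
      unfolding expect2_def q_eq using supp_p u2_indep
      by (simp, intro integral_cong_AE) (auto simp: AE_measure_pmf_iff)
    then show "expect2 p q' (u2 G) \<le> expect2 p q (u2 G)" by simp
  qed
  show ?thesis
    unfolding Nash_def using p q dev1 dev2 by blast
qed

lemma not_in_G_LS_MP_if_all_pure_Nash:
  assumes "\<forall>a \<in> A1 G. \<forall>b \<in> A2 G. pure_Nash G (a, b)"
  shows "\<not> in_G_LS MP G"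
  using Nash_MP_if_all_pure_Nash[OF assms]
  unfolding in_G_LS_def locally_suboptimal_def SPE_def strat1_def strat2_def by blast

text \<open>After the first round the profile \<open>\<phi> e k\<close> is played in round \<open>k + 1\<close>, where \<open>e\<close> is
  the first-round outcome; play therefore ignores every later deviation.\<close>

definition trigger_profile ::
    "'a \<times> 'b \<Rightarrow> ('a \<times> 'b \<Rightarrow> nat \<Rightarrow> 'a \<times> 'b) \<Rightarrow> ('a, 'b) hist \<Rightarrow> 'a \<times> 'b" where
  "trigger_profile x0 \<phi> h = (if h = [] then x0 else \<phi> (hd h) (length h))"

definition trigger1 :: "'a \<times> 'b \<Rightarrow> ('a \<times> 'b \<Rightarrow> nat \<Rightarrow> 'a \<times> 'b) \<Rightarrow> ('a, 'b) hist \<Rightarrow> 'a pmf" where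
  "trigger1 x0 \<phi> h = return_pmf (fst (trigger_profile x0 \<phi> h))"

definition trigger2 :: "'a \<times> 'b \<Rightarrow> ('a \<times> 'b \<Rightarrow> nat \<Rightarrow> 'a \<times> 'b) \<Rightarrow> ('a, 'b) hist \<Rightarrow> 'b pmf" where
  "trigger2 x0 \<phi> h = return_pmf (snd (trigger_profile x0 \<phi> h))"

lemma cont_val_trigger:
  "h \<noteq> [] \<Longrightarrow> cont_val u n (trigger1 x0 \<phi>) (trigger2 x0 \<phi>) h
     = (\<Sum>j<n. case_prod u (\<phi> (hd h) (length h + j)))"
proof (induction n arbitrary: h)
  case 0
  then show ?case by simp
next
  case (Suc n)
  obtain a b where ab: "\<phi> (hd h) (length h) = (a, b)"
    by fastforce
  have "cont_val u (Suc n) (trigger1 x0 \<phi>) (trigger2 x0 \<phi>) h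
      = u a b + cont_val u n (trigger1 x0 \<phi>) (trigger2 x0 \<phi>) (h @ [(a, b)])"
    using Suc.prems ab by (simp add: trigger1_def trigger2_def trigger_profile_def)
  also have "\<dots> = u a b + (\<Sum>j<n. case_prod u (\<phi> (hd h) (Suc (length h) + j)))"
    using Suc.prems by (simp add: Suc.IH)
  also have "\<dots> = (\<Sum>j<Suc n. case_prod u (\<phi> (hd h) (length h + j)))"
    by (simp add: sum.lessThan_Suc_shift ab del: sum.lessThan_Suc)
  finally show ?case .
qed

lemma cont_val_trigger_deviation1:
  assumes Nash: "\<forall>e k. pure_Nash G (\<phi> e k)" and d1: "strat1 PP G d1"
  shows "h \<noteq> [] \<Longrightarrow> valid_hist G h \<Longrightarrow> cont_val (u1 G) n d1 (trigger2 x0 \<phi>) h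
     \<le> (\<Sum>j<n. case_prod (u1 G) (\<phi> (hd h) (length h + j)))"
proof (induction n arbitrary: h)
  case 0
  then show ?case by simp
next
  case (Suc n)
  obtain a where a: "d1 h = return_pmf a" "a \<in> A1 G"
    using d1 Suc.prems by (auto simp: strat1_def avail1_def)
  obtain x y where xy: "\<phi> (hd h) (length h) = (x, y)"
    by fastforce
  with Nash have y: "y \<in> A2 G" and best: "u1 G a y \<le> u1 G x y"
    using a by (metis pure_Nash.simps)+
  have "valid_hist G (h @ [(a, y)])"
    using Suc.prems a y by (simp add: valid_hist_def)
  then have IH: "cont_val (u1 G) n d1 (trigger2 x0 \<phi>) (h @ [(a, y)])
      \<le> (\<Sum>j<n. case_prod (u1 G) (\<phi> (hd h) (Suc (length h) + j)))"
    using Suc.IH[of "h @ [(a, y)]"] Suc.prems by simp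
  have "cont_val (u1 G) (Suc n) d1 (trigger2 x0 \<phi>) h
      = u1 G a y + cont_val (u1 G) n d1 (trigger2 x0 \<phi>) (h @ [(a, y)])"
    using Suc.prems a xy by (simp add: trigger2_def trigger_profile_def)
  also have "\<dots> \<le> u1 G x y + (\<Sum>j<n. case_prod (u1 G) (\<phi> (hd h) (Suc (length h) + j)))"
    using best IH by linarith
  also have "\<dots> = (\<Sum>j<Suc n. case_prod (u1 G) (\<phi> (hd h) (length h + j)))"
    by (simp add: sum.lessThan_Suc_shift xy del: sum.lessThan_Suc)
  finally show ?case .
qed

lemma cont_val_trigger_deviation2:
  assumes Nash: "\<forall>e k. pure_Nash G (\<phi> e k)" and d2: "strat2 PP G d2"
  shows "h \<noteq> [] \<Longrightarrow> valid_hist G h \<Longrightarrow> cont_val (u2 G) n (trigger1 x0 \<phi>) d2 h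
     \<le> (\<Sum>j<n. case_prod (u2 G) (\<phi> (hd h) (length h + j)))"
proof (induction n arbitrary: h)
  case 0
  then show ?case by simp
next
  case (Suc n)
  obtain b where b: "d2 h = return_pmf b" "b \<in> A2 G"
    using d2 Suc.prems by (auto simp: strat2_def avail2_def)
  obtain x y where xy: "\<phi> (hd h) (length h) = (x, y)"
    by fastforce
  with Nash have x: "x \<in> A1 G" and best: "u2 G x b \<le> u2 G x y"
    using b by (metis pure_Nash.simps)+
  have "valid_hist G (h @ [(x, b)])"
    using Suc.prems b x by (simp add: valid_hist_def)
  then have IH: "cont_val (u2 G) n (trigger1 x0 \<phi>) d2 (h @ [(x, b)])
      \<le> (\<Sum>j<n. case_prod (u2 G) (\<phi> (hd h) (Suc (length h) + j)))"
    using Suc.IH[of "h @ [(x, b)]"] Suc.prems by simp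
  have "cont_val (u2 G) (Suc n) (trigger1 x0 \<phi>) d2 h
      = u2 G x b + cont_val (u2 G) n (trigger1 x0 \<phi>) d2 (h @ [(x, b)])"
    using Suc.prems b xy by (simp add: trigger1_def trigger_profile_def)
  also have "\<dots> \<le> u2 G x y + (\<Sum>j<n. case_prod (u2 G) (\<phi> (hd h) (Suc (length h) + j)))"
    using best IH by linarith
  also have "\<dots> = (\<Sum>j<Suc n. case_prod (u2 G) (\<phi> (hd h) (length h + j)))"
    by (simp add: sum.lessThan_Suc_shift xy del: sum.lessThan_Suc)
  finally show ?case .
qed

definition deters_deviations ::
    "('a, 'b) stage_game \<Rightarrow> 'a \<Rightarrow> 'b \<Rightarrow> nat \<Rightarrow> ('a \<times> 'b \<Rightarrow> nat \<Rightarrow> 'a \<times> 'b) \<Rightarrow> bool" where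
  "deters_deviations G a0 b0 n \<phi> \<longleftrightarrow>
    (\<forall>a \<in> A1 G. u1 G a b0 + (\<Sum>j<n. case_prod (u1 G) (\<phi> (a, b0) (Suc j)))
      \<le> u1 G a0 b0 + (\<Sum>j<n. case_prod (u1 G) (\<phi> (a0, b0) (Suc j)))) \<and>
    (\<forall>b \<in> A2 G. u2 G a0 b + (\<Sum>j<n. case_prod (u2 G) (\<phi> (a0, b) (Suc j)))
      \<le> u2 G a0 b0 + (\<Sum>j<n. case_prod (u2 G) (\<phi> (a0, b0) (Suc j))))"

lemma SPE_trigger:
  assumes Nash: "\<forall>e k. pure_Nash G (\<phi> e k)" and a0: "a0 \<in> A1 G" and b0: "b0 \<in> A2 G"
    and deters: "deters_deviations G a0 b0 n \<phi>"
  shows "SPE G (Suc n) PP (trigger1 (a0, b0) \<phi>) (trigger2 (a0, b0) \<phi>)"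
proof -
  define s1 where "s1 = trigger1 (a0, b0) \<phi>"
  define s2 where "s2 = trigger2 (a0, b0) \<phi>"
  have "fst (trigger_profile (a0, b0) \<phi> h) \<in> A1 G \<and> snd (trigger_profile (a0, b0) \<phi> h) \<in> A2 G"
    for h
    using Nash[rule_format, of "hd h" "length h"] a0 b0
    by (cases "\<phi> (hd h) (length h)") (auto simp: trigger_profile_def)
  then have strats: "strat1 PP G s1" "strat2 PP G s2"
    by (auto simp: strat1_def strat2_def avail1_def avail2_def s1_def s2_def trigger1_def trigger2_def)
  have path: "cont_val u (Suc n) s1 s2 []
      = u a0 b0 + (\<Sum>j<n. case_prod u (\<phi> (a0, b0) (Suc j)))" for u
    using cont_val_trigger[of "[(a0, b0)]"]
    by (simp add: s1_def s2_def trigger1_def trigger2_def trigger_profile_def)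
  have first1: "cont_val (u1 G) (Suc n) d1 s2 [] \<le> cont_val (u1 G) (Suc n) s1 s2 []"
    if d1: "strat1 PP G d1" for d1
  proof -
    obtain a where a: "d1 [] = return_pmf a" "a \<in> A1 G"
      using d1 unfolding strat1_def avail1_def valid_hist_def by force
    have "cont_val (u1 G) (Suc n) d1 s2 [] = u1 G a b0 + cont_val (u1 G) n d1 s2 [(a, b0)]"
      using a by (simp add: s2_def trigger2_def trigger_profile_def)
    also have "\<dots> \<le> u1 G a b0 + (\<Sum>j<n. case_prod (u1 G) (\<phi> (a, b0) (Suc j)))"
      using cont_val_trigger_deviation1[OF Nash d1, of "[(a, b0)]"] a b0
      by (simp add: valid_hist_def s2_def)
    also have "\<dots> \<le> cont_val (u1 G) (Suc n) s1 s2 []"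
      using deters a path by (simp add: deters_deviations_def)
    finally show ?thesis .
  qed
  have first2: "cont_val (u2 G) (Suc n) s1 d2 [] \<le> cont_val (u2 G) (Suc n) s1 s2 []"
    if d2: "strat2 PP G d2" for d2
  proof -
    obtain b where b: "d2 [] = return_pmf b" "b \<in> A2 G"
      using d2 unfolding strat2_def avail2_def valid_hist_def by force
    have "cont_val (u2 G) (Suc n) s1 d2 [] = u2 G a0 b + cont_val (u2 G) n s1 d2 [(a0, b)]"
      using b by (simp add: s1_def trigger1_def trigger_profile_def)
    also have "\<dots> \<le> u2 G a0 b + (\<Sum>j<n. case_prod (u2 G) (\<phi> (a0, b) (Suc j)))"
      using cont_val_trigger_deviation2[OF Nash d2, of "[(a0, b)]"] a0 b
      by (simp add: valid_hist_def s1_def)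
    also have "\<dots> \<le> cont_val (u2 G) (Suc n) s1 s2 []"
      using deters b path by (simp add: deters_deviations_def)
    finally show ?thesis .
  qed
  have later1: "cont_val (u1 G) m d1 s2 h \<le> cont_val (u1 G) m s1 s2 h"
    if "strat1 PP G d1" "valid_hist G h" "h \<noteq> []" for d1 h m
    using cont_val_trigger_deviation1[OF Nash that(1,3,2)] cont_val_trigger[OF that(3)]
    by (simp add: s1_def s2_def)
  have later2: "cont_val (u2 G) m s1 d2 h \<le> cont_val (u2 G) m s1 s2 h"
    if "strat2 PP G d2" "valid_hist G h" "h \<noteq> []" for d2 h m
    using cont_val_trigger_deviation2[OF Nash that(1,3,2)] cont_val_trigger[OF that(3)]
    by (simp add: s1_def s2_def)
  show ?thesis
    unfolding SPE_def s1_def[symmetric] s2_def[symmetric]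
    using strats first1 first2 later1 later2 by (metis list.size(3) minus_nat.diff_0)
qed

lemma sum_lessThan_ge_two_levels:
  fixes f :: "nat \<Rightarrow> real"
  assumes "J \<subseteq> {..<n}" and "\<And>j. j < n \<Longrightarrow> lo \<le> f j" and "\<And>j. j \<in> J \<Longrightarrow> lo + \<delta> \<le> f j"
  shows "real n * lo + real (card J) * \<delta> \<le> (\<Sum>j<n. f j)"
proof -
  have "(\<Sum>j<n. lo + (if j \<in> J then \<delta> else 0)) \<le> (\<Sum>j<n. f j)"
    using assms by (intro sum_mono) auto
  moreover have "(\<Sum>j<n. lo + (if j \<in> J then \<delta> else 0)) = real n * lo + real (card J) * \<delta>"
    using assms(1) by (simp add: sum.distrib sum.If_cases Int_absorb1)
  ultimately show ?thesis by simp
qed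

lemma argmin_and_strictly_greater:
  fixes f :: "'c \<Rightarrow> 'd :: linorder"
  assumes "finite S" and "card (f ` S) > 1"
  obtains L H where "L \<in> S" "H \<in> S" "\<forall>x \<in> S. f L \<le> f x" "f L < f H"
proof -
  have fin: "finite (f ` S)" and ne: "f ` S \<noteq> {}"
    using assms by auto
  obtain L where L: "L \<in> S" "f L = Min (f ` S)"
    using Min_in[OF fin ne] by auto
  have "f ` S \<noteq> {f L}"
    using assms(2) by auto
  then obtain H where H: "H \<in> S" "f H \<noteq> f L"
    using L(1) by auto
  have min: "\<forall>x \<in> S. f L \<le> f x"
    using L(2) fin by simp
  with H have "f L < f H"
    by (simp add: order_less_le)
  with L(1) H(1) min show ?thesis
    using that by blast
qed

lemma ex_deterring_continuation:
  assumes wf: "wf_game G" and V1: "card (V1 PP G) > 1" and V2: "card (V2 PP G) > 1"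
  obtains n \<phi> where "\<forall>e k. pure_Nash G (\<phi> e k)" and "deters_deviations G a0 b0 n \<phi>"
proof -
  define U1 where "U1 = case_prod (u1 G)"
  define U2 where "U2 = case_prod (u2 G)"
  define NP where "NP = Collect (pure_Nash G)"
  have fin: "finite NP"
    using finite_pure_Nash[OF wf] by (simp add: NP_def)
  have "card (U1 ` NP) > 1" and "card (U2 ` NP) > 1"
    using V1 V2 by (simp_all add: V1_PP_eq V2_PP_eq U1_def U2_def NP_def)
  then obtain L1 H1 L2 H2 where L1: "L1 \<in> NP" "\<forall>x \<in> NP. U1 L1 \<le> U1 x"
      and H1: "H1 \<in> NP" "U1 L1 < U1 H1"
      and L2: "L2 \<in> NP" "\<forall>x \<in> NP. U2 L2 \<le> U2 x"
      and H2: "H2 \<in> NP" "U2 L2 < U2 H2"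
    by (metis argmin_and_strictly_greater[OF fin])
  define \<delta>1 where "\<delta>1 = U1 H1 - U1 L1"
  define \<delta>2 where "\<delta>2 = U2 H2 - U2 L2"
  define D1 where "D1 = Max ((\<lambda>a. u1 G a b0) ` A1 G) - u1 G a0 b0"
  define D2 where "D2 = Max ((\<lambda>b. u2 G a0 b) ` A2 G) - u2 G a0 b0"
  have gain1: "u1 G a b0 - u1 G a0 b0 \<le> D1" if "a \<in> A1 G" for a
    using wf that by (simp add: D1_def wf_game_def)
  have gain2: "u2 G a0 b - u2 G a0 b0 \<le> D2" if "b \<in> A2 G" for b
    using wf that by (simp add: D2_def wf_game_def)
  obtain m :: nat where "max (D1 / \<delta>1) (D2 / \<delta>2) < real m"
    using reals_Archimedean2 by blast
  then have m1: "D1 < real m * \<delta>1" and m2: "D2 < real m * \<delta>2"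
    using H1(2) H2(2) by (simp_all add: \<delta>1_def \<delta>2_def pos_divide_less_eq)
  define \<phi> where "\<phi> = (\<lambda>(a, b) k.
      if a \<noteq> a0 \<and> b = b0 then L1 else if a = a0 \<and> b \<noteq> b0 then L2
      else if k \<le> m then H1 else H2)"
  have Nash: "\<forall>e k. pure_Nash G (\<phi> e k)"
    using L1 L2 H1 H2 by (simp add: \<phi>_def NP_def split_beta)
  have reward1: "real (2 * m) * U1 L1 + real m * \<delta>1 \<le> (\<Sum>j<2 * m. U1 (\<phi> (a0, b0) (Suc j)))"
    using sum_lessThan_ge_two_levels[of "{..<m}" "2 * m" "U1 L1"
        "\<lambda>j. U1 (\<phi> (a0, b0) (Suc j))" \<delta>1] L1(2) H1 H2(1) by (simp add: \<phi>_def \<delta>1_def)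
  have reward2: "real (2 * m) * U2 L2 + real m * \<delta>2 \<le> (\<Sum>j<2 * m. U2 (\<phi> (a0, b0) (Suc j)))"
    using sum_lessThan_ge_two_levels[of "{m..<2 * m}" "2 * m" "U2 L2"
        "\<lambda>j. U2 (\<phi> (a0, b0) (Suc j))" \<delta>2] L2(2) H2 H1(1) by (simp add: \<phi>_def \<delta>2_def subset_eq)
  have incentive1: "u1 G a b0 + (\<Sum>j<2 * m. U1 (\<phi> (a, b0) (Suc j)))
      \<le> u1 G a0 b0 + (\<Sum>j<2 * m. U1 (\<phi> (a0, b0) (Suc j)))" if "a \<in> A1 G" for a
  proof (cases "a = a0")
    case False
    then show ?thesis
      using gain1[OF that] m1 reward1 by (simp add: \<phi>_def)
  qed simp
  have incentive2: "u2 G a0 b + (\<Sum>j<2 * m. U2 (\<phi> (a0, b) (Suc j)))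
      \<le> u2 G a0 b0 + (\<Sum>j<2 * m. U2 (\<phi> (a0, b0) (Suc j)))" if "b \<in> A2 G" for b
  proof (cases "b = b0")
    case False
    then show ?thesis
      using gain2[OF that] m2 reward2 by (simp add: \<phi>_def)
  qed simp
  show ?thesis
    using incentive1 incentive2
    by (intro that[OF Nash, of "2 * m"]) (simp add: deters_deviations_def U1_def U2_def)
qed

theorem mainTheorem10:
  fixes G :: "('a, 'b) stage_game"
  assumes "wf_game G"
    and "card (V1 PP G) > 1"
    and "card (V2 PP G) > 1"
    and "in_G_LS MP G"
  shows "in_G_LS PP G"
proof -
  have "\<not> (\<forall>a \<in> A1 G. \<forall>b \<in> A2 G. pure_Nash G (a, b))"
    using not_in_G_LS_MP_if_all_pure_Nash assms(4) by blast
  then obtain a0 b0 where a0: "a0 \<in> A1 G" and b0: "b0 \<in> A2 G"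
    and not_Nash: "\<not> pure_Nash G (a0, b0)"
    by blast
  obtain n \<phi> where Nash: "\<forall>e k. pure_Nash G (\<phi> e k)"
    and deters: "deters_deviations G a0 b0 n \<phi>"
    by (rule ex_deterring_continuation[OF assms(1-3)])
  have "SPE G (Suc n) PP (trigger1 (a0, b0) \<phi>) (trigger2 (a0, b0) \<phi>)"
    using SPE_trigger[OF Nash a0 b0 deters] .
  moreover have "locally_suboptimal G (Suc n) PP (trigger1 (a0, b0) \<phi>) (trigger2 (a0, b0) \<phi>)"
    unfolding locally_suboptimal_def using not_Nash
    by (intro exI[of _ "[]"])
      (simp add: valid_hist_def trigger1_def trigger2_def trigger_profile_def return_pmf_in_Nash_PP_iff)
  ultimately show ?thesis
    unfolding in_G_LS_def by (intro exI[of _ "Suc n"]) auto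
qed

end
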